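(* Let $\Omega\subset\mathbb{R}^n$ be a bounded domain and take $\omega=\Omega$. Let $m\ge 2$ and $k\ge 1$ be integers, and let $y_0\in L^2(\Omega)$ with $y_0\notin\mathcal{S}_m$. Then Problem $(\mathcal{P})$ (for these $\Omega,\omega=\Omega,k,m,y_0$) does not have optimal controls if and only if $k<m$ and $$\big(\langle y_0,\xi_{k+1}\rangle,\langle y_0,\xi_{k+2}\rangle,\dots,\langle y_0,\xi_m\rangle\big)^T\neq 0 .$$
   Context: Let $\Omega\subset\mathbb{R}^n$ be a bounded domain and $\omega\subset\Omega$ a nonempty open set with characteristic function $\chi_\omega$. Let $\{\xi_i\}_{i\ge1}$ be an orthonormal basis of $L^2(\Omega)$ consisting of eigenfunctions of $-\Delta$ with homogeneous Dirichlet boundary condition, with eigenvalues $0<\lambda_1<\lambda_2\le\lambda_3\le\cdots\to+\infty$; $\langle\cdot,\cdot\rangle$ is the $L^2(\Omega)$ inner product. For $u$ and $y_0\in L^2(\Omega)$, $y(\cdot;u,y_0):\mathbb{R}^+\to L^2(\Omega)$ denotes the solution of $\partial_t y-\Delta y=\chi_\omega u$ in $\Omega\times\mathbb{R}^+$, $y=0$ on $\partial\Omega\times\mathbb{R}^+$, $y(\cdot,0)=y_0$. For a fixed integer $m\ge2$, the target set is $\mathcal{S}_m=\mathrm{span}\{\xi_{m+1},\xi_{m+2},\dots\}$ (the closed linear span, i.e. the set of $y\in L^2(\Omega)$ with $\langle y,\xi_i\rangle=0$ for $i=1,\dots,m$). For an integer $k\ge1$ and positive numbers $\bar a_1,\dots,\bar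 a_k$, the control constraint set is $\mathcal{U}_{\{\bar a_i\}_{i=1}^k}=\{\sum_{i=1}^k\alpha_i(\cdot)\xi_i:\ \text{each }\alpha_i \text{ is measurable from }\mathbb{R}^+\text{ to }[-\bar a_i,\bar a_i]\}$. Problem $(\mathcal{P})$ with $\{\bar a_i\}_{i=1}^k$ is: $\inf\{t\ge0: y(t;u,y_0)\in\mathcal{S}_m\}$ over $u\in\mathcal{U}_{\{\bar a_i\}_{i=1}^k}$; an optimal control is an admissible $u^*$ with $y(t^*;u^*,y_0)\in\mathcal{S}_m$ where $t^*$ is this infimum (the optimal time). For fixed $\Omega,\omega,k,y_0\notin\mathcal{S}_m$, one says "Problem $(\mathcal{P})$ has optimal controls" if for every finite sequence of positive numbers $\{\bar a_i\}_{i=1}^k$ the problem $(\mathcal{P})$ with $\{\bar a_i\}_{i=1}^k$ has an optimal control. *)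

theory Defs
  imports "HOL-Analysis.Analysis"
begin

text \<open>Functions on \<Omega> \<subseteq> R^n are represented by real-valued functions on real^'n;
  elements of L2(\<Omega>) by square-integrable representatives.\<close>

definition L2 :: "(real^'n) set \<Rightarrow> (real^'n \<Rightarrow> real) \<Rightarrow> bool" where
  "L2 \<Omega> f \<longleftrightarrow> set_borel_measurable lebesgue \<Omega> f \<and> set_integrable lebesgue \<Omega> (\<lambda>x. (f x)^2)"

definition l2_inner :: "(real^'n) set \<Rightarrow> (real^'n \<Rightarrow> real) \<Rightarrow> (real^'n \<Rightarrow> real) \<Rightarrow> real" where
  "l2_inner \<Omega> f g = (LINT x:\<Omega>|lebesgue. f x * g x)"

definition partial :: "'n::finite \<Rightarrow> (real^'n \<Rightarrow> real) \<Rightarrow> real^'n \<Rightarrow> real" where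
  "partial j f x = frechet_derivative f (at x) (axis j 1)"

definition grad :: "(real^'n::finite \<Rightarrow> real) \<Rightarrow> real^'n \<Rightarrow> real^'n" where
  "grad f x = (\<chi> j. partial j f x)"

text \<open>Test functions C_c^\<infinity>(\<Omega>): all iterated partial derivatives exist everywhere
  (hence are continuous), compact support contained in \<Omega>.\<close>
definition test_fun :: "(real^'n::finite) set \<Rightarrow> (real^'n \<Rightarrow> real) \<Rightarrow> bool" where
  "test_fun \<Omega> \<phi> \<longleftrightarrow>
     (\<forall>js :: 'n list. \<forall>x. (foldr partial js \<phi>) differentiable (at x)) \<and>
     compact (closure {x. \<phi> x \<noteq> 0}) \<and> closure {x. \<phi> x \<noteq> 0} \<subseteq> \<Omega>"

definition weak_grad :: "(real^'n::finite) set \<Rightarrow> (real^'n \<Rightarrow> real) \<Rightarrow> (real^'n \<Rightarrow> real^'n) \<Rightarrow> bool" where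
  "weak_grad \<Omega> \<xi> G \<longleftrightarrow>
     (\<forall>j. L2 \<Omega> (\<lambda>x. G x $ j)) \<and>
     (\<forall>\<phi> j. test_fun \<Omega> \<phi> \<longrightarrow>
        (LINT x:\<Omega>|lebesgue. \<xi> x * partial j \<phi> x) = - (LINT x:\<Omega>|lebesgue. G x $ j * \<phi> x))"

definition in_H10 :: "(real^'n::finite) set \<Rightarrow> (real^'n \<Rightarrow> real) \<Rightarrow> (real^'n \<Rightarrow> real^'n) \<Rightarrow> bool" where
  "in_H10 \<Omega> \<xi> G \<longleftrightarrow> L2 \<Omega> \<xi> \<and> weak_grad \<Omega> \<xi> G \<and>
     (\<exists>\<phi>s :: nat \<Rightarrow> real^'n \<Rightarrow> real. (\<forall>l. test_fun \<Omega> (\<phi>s l)) \<and>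
        (\<lambda>l. LINT x:\<Omega>|lebesgue. (\<phi>s l x - \<xi> x)^2) \<longlonglongrightarrow> 0 \<and>
        (\<lambda>l. LINT x:\<Omega>|lebesgue. (norm (grad (\<phi>s l) x - G x))^2) \<longlonglongrightarrow> 0)"

definition dirichlet_eigen :: "(real^'n::finite) set \<Rightarrow> (real^'n \<Rightarrow> real) \<Rightarrow> real \<Rightarrow> bool" where
  "dirichlet_eigen \<Omega> \<xi> lam \<longleftrightarrow> (\<exists>G. in_H10 \<Omega> \<xi> G \<and>
     (\<forall>\<phi>. test_fun \<Omega> \<phi> \<longrightarrow>
        (LINT x:\<Omega>|lebesgue. G x \<bullet> grad \<phi> x) = lam * (LINT x:\<Omega>|lebesgue. \<xi> x * \<phi> x)))"

text \<open>{\<xi>_i}_{i\<ge>1} is an orthonormal basis of L2(\<Omega>) of Dirichlet eigenfunctions with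
  eigenvalues 0 < lam_1 < lam_2 \<le> lam_3 \<le> ... \<rightarrow> \<infinity> (indices start at 1).\<close>
definition dirichlet_ONB :: "(real^'n::finite) set \<Rightarrow> (nat \<Rightarrow> real^'n \<Rightarrow> real) \<Rightarrow> (nat \<Rightarrow> real) \<Rightarrow> bool" where
  "dirichlet_ONB \<Omega> \<xi> lam \<longleftrightarrow>
     (\<forall>i\<ge>1. L2 \<Omega> (\<xi> i) \<and> dirichlet_eigen \<Omega> (\<xi> i) (lam i)) \<and>
     (\<forall>i\<ge>1. \<forall>j\<ge>1. l2_inner \<Omega> (\<xi> i) (\<xi> j) = (if i = j then 1 else 0)) \<and>
     (\<forall>f. L2 \<Omega> f \<and> (\<forall>i\<ge>1. l2_inner \<Omega> f (\<xi> i) = 0) \<longrightarrow> (LINT x:\<Omega>|lebesgue. (f x)^2) = 0) \<and>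
     0 < lam 1 \<and> lam 1 < lam 2 \<and> (\<forall>i\<ge>2. lam i \<le> lam (Suc i)) \<and>
     filterlim lam at_top sequentially"

definition in_S :: "(real^'n) set \<Rightarrow> (nat \<Rightarrow> real^'n \<Rightarrow> real) \<Rightarrow> nat \<Rightarrow> (real^'n \<Rightarrow> real) \<Rightarrow> bool" where
  "in_S \<Omega> \<xi> m f \<longleftrightarrow> (\<forall>i\<in>{1..m}. l2_inner \<Omega> f (\<xi> i) = 0)"

definition ctrl :: "(nat \<Rightarrow> real^'n \<Rightarrow> real) \<Rightarrow> nat \<Rightarrow> (nat \<Rightarrow> real \<Rightarrow> real) \<Rightarrow> real \<Rightarrow> real^'n \<Rightarrow> real" where
  "ctrl \<xi> k \<alpha> = (\<lambda>t x. \<Sum>i=1..k. \<alpha> i t * \<xi> i x)"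

definition U_set :: "(nat \<Rightarrow> real^'n \<Rightarrow> real) \<Rightarrow> nat \<Rightarrow> (nat \<Rightarrow> real) \<Rightarrow> (real \<Rightarrow> real^'n \<Rightarrow> real) set" where
  "U_set \<xi> k abar = {ctrl \<xi> k \<alpha> | \<alpha>. \<forall>i\<in>{1..k}.
      \<alpha> i \<in> borel_measurable (restrict_space borel {0..}) \<and> (\<forall>t\<ge>0. \<bar>\<alpha> i t\<bar> \<le> abar i)}"

text \<open>Fourier coefficients of the (mild) solution y(t;u,y0) of
  y_t - \<Delta>y = \<chi>_\<omega> u, y = 0 on \<partial>\<Omega>, y(0) = y0:
  <y(t),\<xi>_i> = e^{-lam_i t}<y0,\<xi>_i> + \<integral>_0^t e^{-lam_i (t-s)} <\<chi>_\<omega> u(s), \<xi>_i> ds.\<close>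
definition heat_coeff :: "(real^'n) set \<Rightarrow> (real^'n) set \<Rightarrow> (nat \<Rightarrow> real^'n \<Rightarrow> real) \<Rightarrow> (nat \<Rightarrow> real)
     \<Rightarrow> (real \<Rightarrow> real^'n \<Rightarrow> real) \<Rightarrow> (real^'n \<Rightarrow> real) \<Rightarrow> real \<Rightarrow> nat \<Rightarrow> real" where
  "heat_coeff \<Omega> \<omega> \<xi> lam u y0 t i =
     exp (- lam i * t) * l2_inner \<Omega> y0 (\<xi> i) +
     (LINT s:{0..t}|lborel. exp (- lam i * (t - s)) * l2_inner \<Omega> (\<lambda>x. indicator \<omega> x * u s x) (\<xi> i))"

definition state_in_S :: "(real^'n) set \<Rightarrow> (real^'n) set \<Rightarrow> (nat \<Rightarrow> real^'n \<Rightarrow> real) \<Rightarrow> (nat \<Rightarrow> real)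
     \<Rightarrow> nat \<Rightarrow> (real \<Rightarrow> real^'n \<Rightarrow> real) \<Rightarrow> (real^'n \<Rightarrow> real) \<Rightarrow> real \<Rightarrow> bool" where
  "state_in_S \<Omega> \<omega> \<xi> lam m u y0 t \<longleftrightarrow> (\<forall>i\<in>{1..m}. heat_coeff \<Omega> \<omega> \<xi> lam u y0 t i = 0)"

definition reach_times :: "(real^'n) set \<Rightarrow> (real^'n) set \<Rightarrow> (nat \<Rightarrow> real^'n \<Rightarrow> real) \<Rightarrow> (nat \<Rightarrow> real)
     \<Rightarrow> nat \<Rightarrow> nat \<Rightarrow> (nat \<Rightarrow> real) \<Rightarrow> (real^'n \<Rightarrow> real) \<Rightarrow> real set" where
  "reach_times \<Omega> \<omega> \<xi> lam k m abar y0 =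
     {t. t \<ge> 0 \<and> (\<exists>u\<in>U_set \<xi> k abar. state_in_S \<Omega> \<omega> \<xi> lam m u y0 t)}"

definition optimal_control :: "(real^'n) set \<Rightarrow> (real^'n) set \<Rightarrow> (nat \<Rightarrow> real^'n \<Rightarrow> real) \<Rightarrow> (nat \<Rightarrow> real)
     \<Rightarrow> nat \<Rightarrow> nat \<Rightarrow> (nat \<Rightarrow> real) \<Rightarrow> (real^'n \<Rightarrow> real) \<Rightarrow> (real \<Rightarrow> real^'n \<Rightarrow> real) \<Rightarrow> bool" where
  "optimal_control \<Omega> \<omega> \<xi> lam k m abar y0 u \<longleftrightarrow>
     u \<in> U_set \<xi> k abar \<and> reach_times \<Omega> \<omega> \<xi> lam k m abar y0 \<noteq> {} \<and>
     state_in_S \<Omega> \<omega> \<xi> lam m u y0 (Inf (reach_times \<Omega> \<omega> \<xi> lam k m abar y0))"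

definition has_optimal_controls :: "(real^'n) set \<Rightarrow> (real^'n) set \<Rightarrow> (nat \<Rightarrow> real^'n \<Rightarrow> real) \<Rightarrow> (nat \<Rightarrow> real)
     \<Rightarrow> nat \<Rightarrow> nat \<Rightarrow> (real^'n \<Rightarrow> real) \<Rightarrow> bool" where
  "has_optimal_controls \<Omega> \<omega> \<xi> lam k m y0 \<longleftrightarrow>
     (\<forall>abar. (\<forall>i\<in>{1..k}. abar i > 0) \<longrightarrow> (\<exists>u. optimal_control \<Omega> \<omega> \<xi> lam k m abar y0 u))"

end

theory Submission imports Defs begin

text \<open>With \<open>\<omega> = \<Omega>\<close> and controls spanned by \<open>\<xi>\<^sub>1, \<dots>, \<xi>\<^sub>k\<close>, the Fourier modes decouple:
  mode \<open>i \<le> k\<close> obeys \<open>y\<^sub>i' = -\<lambda>\<^sub>i y\<^sub>i + \<alpha>\<^sub>i\<close> with \<open>|\<alpha>\<^sub>i| \<le> a\<^sub>i\<close>, and mode \<open>i > k\<close> decays freely,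
  so it never vanishes unless it starts at zero. A controlled mode can be brought to zero at time
  \<open>t\<close> iff \<open>|y\<^sub>i(0)| \<lambda>\<^sub>i \<le> a\<^sub>i (e\<^bsup>\<lambda>\<^sub>i t\<^esup> - 1)\<close>, and then already by a constant control. Hence the set of
  reaching times is empty if some mode \<open>k < i \<le> m\<close> of \<open>y\<^sub>0\<close> is nonzero, and otherwise is a
  nonempty closed half-line, whose infimum is a reaching time.\<close>

lemma L2_mult_integrable:
  assumes "L2 \<Omega> f" "L2 \<Omega> g"
  shows "integrable lebesgue (\<lambda>x. indicator \<Omega> x * (f x * g x))"
proof -
  have mf: "(\<lambda>x. indicator \<Omega> x * f x) \<in> borel_measurable lebesgue"
    and mg: "(\<lambda>x. indicator \<Omega> x * g x) \<in> borel_measurable lebesgue"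
    and f2: "integrable lebesgue (\<lambda>x. indicator \<Omega> x * (f x)\<^sup>2)"
    and g2: "integrable lebesgue (\<lambda>x. indicator \<Omega> x * (g x)\<^sup>2)"
    using assms unfolding L2_def set_integrable_def set_borel_measurable_def by auto
  have "(\<lambda>x. (indicator \<Omega> x * f x) * (indicator \<Omega> x * g x)) \<in> borel_measurable lebesgue"
    using mf mg by measurable
  moreover have "(\<lambda>x. (indicator \<Omega> x * f x) * (indicator \<Omega> x * g x)) = (\<lambda>x. indicator \<Omega> x * (f x * g x))"
    by (auto simp: indicator_def)
  ultimately have meas: "(\<lambda>x. indicator \<Omega> x * (f x * g x)) \<in> borel_measurable lebesgue"
    by simp
  have "\<bar>f x * g x\<bar> \<le> (f x)\<^sup>2 + (g x)\<^sup>2" for x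
  proof -
    have "2 * \<bar>f x * g x\<bar> \<le> (f x)\<^sup>2 + (g x)\<^sup>2"
      using sum_squares_bound[of "\<bar>f x\<bar>" "\<bar>g x\<bar>"] by (simp add: abs_mult)
    then show ?thesis by simp
  qed
  then have "norm (indicator \<Omega> x * (f x * g x)) \<le> norm (indicator \<Omega> x * (f x)\<^sup>2 + indicator \<Omega> x * (g x)\<^sup>2)" for x
    by (auto simp: indicator_def)
  then show ?thesis
    by (intro Bochner_Integration.integrable_bound[OF Bochner_Integration.integrable_add[OF f2 g2] meas]) auto
qed

lemma l2_inner_ctrl:
  assumes L2: "\<And>i. i \<ge> 1 \<Longrightarrow> L2 \<Omega> (\<xi> i)"
    and orthonormal: "\<And>i j. i \<ge> 1 \<Longrightarrow> j \<ge> 1 \<Longrightarrow> l2_inner \<Omega> (\<xi> i) (\<xi> j) = (if i = j then 1 else 0)"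
    and "i \<ge> 1"
  shows "l2_inner \<Omega> (\<lambda>x. indicator \<Omega> x * ctrl \<xi> k \<alpha> s x) (\<xi> i) = (if i \<le> k then \<alpha> i s else 0)"
proof -
  have "l2_inner \<Omega> (\<lambda>x. indicator \<Omega> x * ctrl \<xi> k \<alpha> s x) (\<xi> i)
      = integral\<^sup>L lebesgue (\<lambda>x. \<Sum>j=1..k. \<alpha> j s * (indicator \<Omega> x * (\<xi> j x * \<xi> i x)))"
    unfolding l2_inner_def set_lebesgue_integral_def ctrl_def
    by (rule Bochner_Integration.integral_cong)
      (auto simp: indicator_def sum_distrib_left sum_distrib_right mult.assoc mult.left_commute)
  also have "\<dots> = (\<Sum>j=1..k. \<alpha> j s * l2_inner \<Omega> (\<xi> j) (\<xi> i))"
    unfolding l2_inner_def set_lebesgue_integral_def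
    by (subst Bochner_Integration.integral_sum) (auto intro!: L2_mult_integrable L2 \<open>i \<ge> 1\<close>)
  also have "\<dots> = (\<Sum>j=1..k. if j = i then \<alpha> j s else 0)"
    by (rule sum.cong) (use orthonormal \<open>i \<ge> 1\<close> in auto)
  also have "\<dots> = (if i \<le> k then \<alpha> i s else 0)"
    using \<open>i \<ge> 1\<close> by (simp add: sum.delta)
  finally show ?thesis .
qed

lemma dirichlet_ONB_eigenvalue_pos:
  assumes "dirichlet_ONB \<Omega> \<xi> lam" "i \<ge> 1"
  shows "lam i > 0"
  using \<open>i \<ge> 1\<close>
proof (induction i rule: dec_induct)
  case base
  then show ?case using assms(1) unfolding dirichlet_ONB_def by simp
next
  case (step n)
  have "lam n \<le> lam (Suc n)"
  proof (cases "n = 1")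
    case True
    then show ?thesis using assms(1) unfolding dirichlet_ONB_def by (simp add: numeral_2_eq_2)
  next
    case False
    then show ?thesis using assms(1) step(1) unfolding dirichlet_ONB_def by simp
  qed
  then show ?case using step.IH by simp
qed

lemma heat_coeff_ctrl:
  assumes "dirichlet_ONB \<Omega> \<xi> lam" "i \<ge> 1"
  shows "heat_coeff \<Omega> \<Omega> \<xi> lam (ctrl \<xi> k \<alpha>) y0 t i =
           exp (- lam i * t) * l2_inner \<Omega> y0 (\<xi> i) +
           (if i \<le> k then LINT s:{0..t}|lborel. exp (- lam i * (t - s)) * \<alpha> i s else 0)"
proof -
  have "l2_inner \<Omega> (\<lambda>x. indicator \<Omega> x * ctrl \<xi> k \<alpha> s x) (\<xi> i) = (if i \<le> k then \<alpha> i s else 0)" for s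
    by (rule l2_inner_ctrl) (use assms in \<open>auto simp: dirichlet_ONB_def\<close>)
  then show ?thesis
    unfolding heat_coeff_def by simp
qed

lemma exp_decay_integral:
  fixes l t :: real
  assumes "l > 0" "t \<ge> 0"
  shows "(LINT s:{0..t}|lborel. exp (- l * (t - s))) = (1 - exp (- l * t)) / l"
proof -
  have "integral\<^sup>L lborel (\<lambda>s. indicator {0..t} s *\<^sub>R exp (- l * (t - s)))
        = exp (- l * (t - t)) / l - exp (- l * (t - 0)) / l"
  proof (rule integral_FTC_atLeastAtMost)
    fix x
    have "((\<lambda>s. exp (- l * (t - s)) / l) has_real_derivative exp (- l * (t - x)) * l / l) (at x)"
      by (auto intro!: derivative_eq_intros)
    then show "((\<lambda>s. exp (- l * (t - s)) / l) has_vector_derivative exp (- l * (t - x))) (at x within {0..t})"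
      using \<open>l > 0\<close> by (simp add: has_real_derivative_iff_has_vector_derivative has_vector_derivative_at_within)
  qed (use assms in \<open>auto intro!: continuous_intros\<close>)
  then show ?thesis
    unfolding set_lebesgue_integral_def by (simp add: diff_divide_distrib)
qed

lemma abs_exp_decay_convolution_le:
  fixes l t A :: real and \<alpha> :: "real \<Rightarrow> real"
  assumes "l > 0" "t \<ge> 0" "\<And>s. 0 \<le> s \<Longrightarrow> \<bar>\<alpha> s\<bar> \<le> A"
  shows "\<bar>LINT s:{0..t}|lborel. exp (- l * (t - s)) * \<alpha> s\<bar> \<le> A * ((1 - exp (- l * t)) / l)"
proof -
  have "A \<ge> 0" using assms(3)[of 0] by simp
  have "\<bar>LINT s:{0..t}|lborel. exp (- l * (t - s)) * \<alpha> s\<bar>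
      \<le> integral\<^sup>L lborel (\<lambda>s. norm (indicator {0..t} s *\<^sub>R (exp (- l * (t - s)) * \<alpha> s)))"
    unfolding set_lebesgue_integral_def real_norm_def[symmetric] by (rule integral_norm_bound)
  also have "\<dots> \<le> integral\<^sup>L lborel (\<lambda>s. indicator {0..t} s *\<^sub>R (A * exp (- l * (t - s))))"
  proof (rule integral_mono')
    have "continuous_on {0..t} (\<lambda>s. A * exp (- l * (t - s)))"
      by (intro continuous_intros)
    then show "integrable lborel (\<lambda>s. indicator {0..t} s *\<^sub>R (A * exp (- l * (t - s))))"
      using borel_integrable_atLeastAtMost' unfolding set_integrable_def by blast
  next
    fix s
    show "0 \<le> indicator {0..t} s *\<^sub>R (A * exp (- l * (t - s)))"
      using \<open>A \<ge> 0\<close> by (simp add: indicator_def)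
    show "norm (indicator {0..t} s *\<^sub>R (exp (- l * (t - s)) * \<alpha> s)) \<le> indicator {0..t} s *\<^sub>R (A * exp (- l * (t - s)))"
      using assms(3)[of s] by (auto simp: indicator_def abs_mult mult.commute)
  qed
  also have "\<dots> = A * (LINT s:{0..t}|lborel. exp (- l * (t - s)))"
    unfolding set_lebesgue_integral_def by (simp add: ac_simps)
  also have "\<dots> = A * ((1 - exp (- l * t)) / l)"
    using exp_decay_integral assms by simp
  finally show ?thesis .
qed

lemma exp_decay_steerable_bound:
  fixes l t A c :: real and \<alpha> :: "real \<Rightarrow> real"
  assumes "l > 0" "t \<ge> 0" "\<And>s. 0 \<le> s \<Longrightarrow> \<bar>\<alpha> s\<bar> \<le> A"
    and "exp (- l * t) * c + (LINT s:{0..t}|lborel. exp (- l * (t - s)) * \<alpha> s) = 0"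
  shows "\<bar>c\<bar> * l \<le> A * (exp (l * t) - 1)"
proof -
  have "exp (- l * t) * c = - (LINT s:{0..t}|lborel. exp (- l * (t - s)) * \<alpha> s)"
    using assms(4) by linarith
  then have "\<bar>exp (- l * t) * c\<bar> \<le> A * ((1 - exp (- l * t)) / l)"
    using abs_exp_decay_convolution_le[OF assms(1-3)] by simp
  then have "\<bar>c\<bar> * l * exp (- l * t) \<le> A * (1 - exp (- l * t))"
    using \<open>l > 0\<close> by (simp add: abs_mult field_simps)
  then have "\<bar>c\<bar> * l * exp (- l * t) * exp (l * t) \<le> A * (1 - exp (- l * t)) * exp (l * t)"
    by (simp add: mult_right_mono)
  then show ?thesis
    by (simp add: algebra_simps flip: exp_add)
qed

lemma exp_decay_steerable_by_constant:
  fixes l t A c :: real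
  assumes "l > 0" "t \<ge> 0" "A \<ge> 0" "\<bar>c\<bar> * l \<le> A * (exp (l * t) - 1)"
  obtains a where "\<bar>a\<bar> \<le> A" "exp (- l * t) * c + a * ((1 - exp (- l * t)) / l) = 0"
proof (cases "c = 0")
  case True
  then show ?thesis using that[of 0] \<open>A \<ge> 0\<close> by simp
next
  case False
  then have "A * (exp (l * t) - 1) > 0"
    using assms(1,4) by (metis zero_less_abs_iff mult_pos_pos order.strict_trans2)
  then have E: "exp (l * t) - 1 > 0"
    using \<open>A \<ge> 0\<close> by (simp add: zero_less_mult_iff)
  define a where "a = - c * l / (exp (l * t) - 1)"
  have "inverse F * c + (- c * l / (F - 1)) * ((1 - inverse F) / l) = 0" if "F > 1" for F
    using that assms(1) by (simp add: field_simps)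
  then have "exp (- l * t) * c + a * ((1 - exp (- l * t)) / l) = 0"
    using E by (simp add: a_def exp_minus)
  moreover have "\<bar>a\<bar> \<le> A"
    using E assms(1,4) by (simp add: a_def abs_mult abs_divide pos_divide_le_eq)
  ultimately show ?thesis using that by blast
qed

lemma reach_times_empty_if_uncontrolled_mode:
  assumes "dirichlet_ONB \<Omega> \<xi> lam" "i \<in> {k+1..m}" "l2_inner \<Omega> y0 (\<xi> i) \<noteq> 0"
  shows "reach_times \<Omega> \<Omega> \<xi> lam k m abar y0 = {}"
proof -
  have "\<not> state_in_S \<Omega> \<Omega> \<xi> lam m (ctrl \<xi> k \<alpha>) y0 t" for \<alpha> t
  proof -
    have "heat_coeff \<Omega> \<Omega> \<xi> lam (ctrl \<xi> k \<alpha>) y0 t i \<noteq> 0"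
      using assms heat_coeff_ctrl[OF assms(1), of i k \<alpha> y0 t] by simp
    moreover have "i \<in> {1..m}" using assms(2) by simp
    ultimately show ?thesis unfolding state_in_S_def by blast
  qed
  then show ?thesis
    unfolding reach_times_def U_set_def by auto
qed

lemma reach_times_subset:
  assumes "dirichlet_ONB \<Omega> \<xi> lam"
  shows "reach_times \<Omega> \<Omega> \<xi> lam k m abar y0 \<subseteq>
    {t. 0 \<le> t \<and> (\<forall>i\<in>{1..min k m}. \<bar>l2_inner \<Omega> y0 (\<xi> i)\<bar> * lam i \<le> abar i * (exp (lam i * t) - 1))}"
proof
  fix t assume "t \<in> reach_times \<Omega> \<Omega> \<xi> lam k m abar y0"
  then obtain \<alpha> where "0 \<le> t" and reach: "state_in_S \<Omega> \<Omega> \<xi> lam m (ctrl \<xi> k \<alpha>) y0 t"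
    and bound: "\<And>i s. i \<in> {1..k} \<Longrightarrow> 0 \<le> s \<Longrightarrow> \<bar>\<alpha> i s\<bar> \<le> abar i"
    unfolding reach_times_def U_set_def by auto
  have "\<bar>l2_inner \<Omega> y0 (\<xi> i)\<bar> * lam i \<le> abar i * (exp (lam i * t) - 1)" if "i \<in> {1..min k m}" for i
  proof (rule exp_decay_steerable_bound)
    show "lam i > 0" using dirichlet_ONB_eigenvalue_pos[OF assms] that by simp
    show "0 \<le> s \<Longrightarrow> \<bar>\<alpha> i s\<bar> \<le> abar i" for s using bound that by simp
    show "exp (- lam i * t) * l2_inner \<Omega> y0 (\<xi> i) + (LINT s:{0..t}|lborel. exp (- lam i * (t - s)) * \<alpha> i s) = 0"
      using reach heat_coeff_ctrl[OF assms, of i k \<alpha> y0 t] that unfolding state_in_S_def by auto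
  qed (rule \<open>0 \<le> t\<close>)
  then show "t \<in> {t. 0 \<le> t \<and> (\<forall>i\<in>{1..min k m}. \<bar>l2_inner \<Omega> y0 (\<xi> i)\<bar> * lam i \<le> abar i * (exp (lam i * t) - 1))}"
    using \<open>0 \<le> t\<close> by blast
qed

lemma reach_times_by_constant_control:
  assumes "dirichlet_ONB \<Omega> \<xi> lam" "\<forall>i\<in>{1..k}. abar i > 0"
    and "\<forall>i\<in>{k+1..m}. l2_inner \<Omega> y0 (\<xi> i) = 0"
    and "0 \<le> t" "\<forall>i\<in>{1..min k m}. \<bar>l2_inner \<Omega> y0 (\<xi> i)\<bar> * lam i \<le> abar i * (exp (lam i * t) - 1)"
  shows "t \<in> reach_times \<Omega> \<Omega> \<xi> lam k m abar y0"
proof -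
  have lam: "lam i > 0" if "i \<ge> 1" for i
    using dirichlet_ONB_eigenvalue_pos[OF assms(1) that] .
  have "\<forall>i\<in>{1..min k m}. \<exists>a. \<bar>a\<bar> \<le> abar i \<and>
      exp (- lam i * t) * l2_inner \<Omega> y0 (\<xi> i) + a * ((1 - exp (- lam i * t)) / lam i) = 0"
  proof
    fix i assume i: "i \<in> {1..min k m}"
    show "\<exists>a. \<bar>a\<bar> \<le> abar i \<and> exp (- lam i * t) * l2_inner \<Omega> y0 (\<xi> i) + a * ((1 - exp (- lam i * t)) / lam i) = 0"
      by (rule exp_decay_steerable_by_constant[of "lam i" t "abar i"])
        (use i lam assms(2,4,5) in \<open>auto simp: less_imp_le\<close>)
  qed
  then obtain a where a: "\<forall>i\<in>{1..min k m}. \<bar>a i\<bar> \<le> abar i \<and>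
      exp (- lam i * t) * l2_inner \<Omega> y0 (\<xi> i) + a i * ((1 - exp (- lam i * t)) / lam i) = 0"
    by (auto dest: bchoice)
  define \<alpha> where "\<alpha> i = (\<lambda>_::real. if i \<le> m then a i else 0)" for i
  have "ctrl \<xi> k \<alpha> \<in> U_set \<xi> k abar"
    unfolding U_set_def
  proof (intro CollectI exI[of _ \<alpha>] conjI ballI allI impI)
    fix i and s :: real assume "i \<in> {1..k}" "0 \<le> s"
    show "\<bar>\<alpha> i s\<bar> \<le> abar i"
      using a assms(2) \<open>i \<in> {1..k}\<close> by (simp add: \<alpha>_def less_imp_le)
  qed (auto simp: \<alpha>_def)
  moreover have "state_in_S \<Omega> \<Omega> \<xi> lam m (ctrl \<xi> k \<alpha>) y0 t"
    unfolding state_in_S_def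
  proof
    fix i assume i: "i \<in> {1..m}"
    show "heat_coeff \<Omega> \<Omega> \<xi> lam (ctrl \<xi> k \<alpha>) y0 t i = 0"
    proof (cases "i \<le> k")
      case True
      with i have "i \<in> {1..min k m}" by simp
      then have steered: "exp (- lam i * t) * l2_inner \<Omega> y0 (\<xi> i) + a i * ((1 - exp (- lam i * t)) / lam i) = 0"
        using a by blast
      have "(LINT s:{0..t}|lborel. exp (- lam i * (t - s)) * \<alpha> i s) = a i * ((1 - exp (- lam i * t)) / lam i)"
        using exp_decay_integral[OF lam[of i] \<open>0 \<le> t\<close>] i True by (simp add: \<alpha>_def mult.commute)
      then show ?thesis
        using heat_coeff_ctrl[OF assms(1), of i k \<alpha> y0 t] steered i True by simp
    next
      case False
      then show ?thesis
        using heat_coeff_ctrl[OF assms(1), of i k \<alpha> y0 t] assms(3) i by simp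
    qed
  qed
  ultimately show ?thesis
    unfolding reach_times_def using \<open>0 \<le> t\<close> by blast
qed

lemma Inf_mem_steering_times:
  fixes c l A :: "nat \<Rightarrow> real"
  assumes "finite I" "\<And>i. i \<in> I \<Longrightarrow> l i > 0 \<and> A i > 0"
  defines "T \<equiv> {t. 0 \<le> t \<and> (\<forall>i\<in>I. \<bar>c i\<bar> * l i \<le> A i * (exp (l i * t) - 1))}"
  shows "T \<noteq> {}" "Inf T \<in> T"
proof -
  define t where "t = (\<Sum>i\<in>I. \<bar>c i\<bar> / A i)"
  have "t \<in> T"
    unfolding T_def
  proof (intro CollectI conjI ballI)
    show "0 \<le> t"
      unfolding t_def using assms(2) by (simp add: sum_nonneg less_imp_le)
    fix i assume "i \<in> I"
    then have l: "l i > 0" and A: "A i > 0" using assms(2) by auto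
    have "\<bar>c i\<bar> / A i \<le> t"
      unfolding t_def using \<open>i \<in> I\<close> assms by (intro member_le_sum) (auto simp: less_imp_le)
    then have "\<bar>c i\<bar> * l i \<le> A i * (l i * t)"
      using l A by (simp add: divide_le_eq field_simps)
    also have "\<dots> \<le> A i * (exp (l i * t) - 1)"
      using exp_ge_add_one_self[of "l i * t"] A by (intro mult_left_mono) linarith+
    finally show "\<bar>c i\<bar> * l i \<le> A i * (exp (l i * t) - 1)" .
  qed
  then show "T \<noteq> {}" by blast
  have "closed T"
  proof -
    have "T = {t. 0 \<le> t} \<inter> (\<Inter>i\<in>I. {t. \<bar>c i\<bar> * l i \<le> A i * (exp (l i * t) - 1)})"
      unfolding T_def by auto
    also have "closed \<dots>"
      by (intro closed_Int closed_INT ballI closed_Collect_le continuous_intros)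
    finally show ?thesis .
  qed
  moreover have "bdd_below T"
    unfolding T_def by (rule bdd_belowI[of _ 0]) auto
  ultimately show "Inf T \<in> T"
    using closed_contains_Inf \<open>T \<noteq> {}\<close> by blast
qed

lemma has_optimal_controls_if_uncontrolled_modes_vanish:
  assumes ONB: "dirichlet_ONB \<Omega> \<xi> lam" and uncontrolled: "\<forall>i\<in>{k+1..m}. l2_inner \<Omega> y0 (\<xi> i) = 0"
  shows "has_optimal_controls \<Omega> \<Omega> \<xi> lam k m y0"
  unfolding has_optimal_controls_def
proof (intro allI impI)
  fix abar :: "nat \<Rightarrow> real" assume abar: "\<forall>i\<in>{1..k}. abar i > 0"
  let ?R = "reach_times \<Omega> \<Omega> \<xi> lam k m abar y0"
  have "?R = {t. 0 \<le> t \<and> (\<forall>i\<in>{1..min k m}. \<bar>l2_inner \<Omega> y0 (\<xi> i)\<bar> * lam i \<le> abar i * (exp (lam i * t) - 1))}"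
    by (rule equalityI[OF reach_times_subset[OF ONB]])
      (use reach_times_by_constant_control[OF ONB abar uncontrolled] in blast)
  moreover have "\<And>i. i \<in> {1..min k m} \<Longrightarrow> lam i > 0 \<and> abar i > 0"
    using dirichlet_ONB_eigenvalue_pos[OF ONB] abar by simp
  ultimately have "Inf ?R \<in> ?R"
    using Inf_mem_steering_times[where I = "{1..min k m}" and l = lam and A = abar
        and c = "\<lambda>i. l2_inner \<Omega> y0 (\<xi> i)"] by simp
  then show "\<exists>u. optimal_control \<Omega> \<Omega> \<xi> lam k m abar y0 u"
    unfolding optimal_control_def reach_times_def by blast
qed

lemma not_has_optimal_controls_if_uncontrolled_mode:
  assumes "dirichlet_ONB \<Omega> \<xi> lam" "i \<in> {k+1..m}" "l2_inner \<Omega> y0 (\<xi> i) \<noteq> 0"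
  shows "\<not> has_optimal_controls \<Omega> \<Omega> \<xi> lam k m y0"
proof
  assume "has_optimal_controls \<Omega> \<Omega> \<xi> lam k m y0"
  then obtain u where "optimal_control \<Omega> \<Omega> \<xi> lam k m (\<lambda>_. 1) y0 u"
    unfolding has_optimal_controls_def by (auto dest: spec[of _ "\<lambda>_. 1"])
  with reach_times_empty_if_uncontrolled_mode[OF assms] show False
    unfolding optimal_control_def by simp
qed

theorem theorem2p1:
  fixes \<Omega> :: "(real^'n::finite) set"
    and \<xi> :: "nat \<Rightarrow> real^'n \<Rightarrow> real"
    and lam :: "nat \<Rightarrow> real"
    and k m :: nat
    and y0 :: "real^'n \<Rightarrow> real"
  assumes "open \<Omega>" and "connected \<Omega>" and "bounded \<Omega>" and "\<Omega> \<noteq> {}"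
    and "dirichlet_ONB \<Omega> \<xi> lam"
    and "m \<ge> 2" and "k \<ge> 1"
    and "L2 \<Omega> y0" and "\<not> in_S \<Omega> \<xi> m y0"
  shows "\<not> has_optimal_controls \<Omega> \<Omega> \<xi> lam k m y0 \<longleftrightarrow>
           k < m \<and> (\<exists>i\<in>{k+1..m}. l2_inner \<Omega> y0 (\<xi> i) \<noteq> 0)"
proof
  assume "\<not> has_optimal_controls \<Omega> \<Omega> \<xi> lam k m y0"
  then have "\<exists>i\<in>{k+1..m}. l2_inner \<Omega> y0 (\<xi> i) \<noteq> 0"
    using has_optimal_controls_if_uncontrolled_modes_vanish[OF \<open>dirichlet_ONB \<Omega> \<xi> lam\<close>] by blast
  then show "k < m \<and> (\<exists>i\<in>{k+1..m}. l2_inner \<Omega> y0 (\<xi> i) \<noteq> 0)"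
    by auto
next
  assume "k < m \<and> (\<exists>i\<in>{k+1..m}. l2_inner \<Omega> y0 (\<xi> i) \<noteq> 0)"
  then show "\<not> has_optimal_controls \<Omega> \<Omega> \<xi> lam k m y0"
    using not_has_optimal_controls_if_uncontrolled_mode[OF \<open>dirichlet_ONB \<Omega> \<xi> lam\<close>] by blast
qed

end
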